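(* Let $m,r$ be integers with $m>1$, $r>2$, and let $S\in\mathcal{MA}(m,r)$. Define $S_0=S$ and, for $n\in\mathbb{N}$, $S_{n+1}=\langle \mathrm{msg}(S_n)\setminus\{\mathrm{M}(S_n)\}\rangle$ if $S_n\neq\langle m,r\rangle$, and $S_{n+1}=\langle m,r\rangle$ otherwise. Then $S_n\in\mathcal{MA}(m,r)$ for all $n\in\mathbb{N}$, and $S_k=\langle m,r\rangle$ for all $k\geq \mathrm{e}(S)-2$.
   Context: $\mathbb{N}=\{0,1,2,\ldots\}$. A numerical semigroup is a subset $S\subseteq\mathbb{N}$ closed under addition, containing $0$, with finite complement; $\langle A\rangle$ is the submonoid generated by $A$; $\mathrm{msg}(S)=\{n_1<\cdots<n_e\}$ is the unique finite minimal system of generators, $\mathrm{e}(S)=e$, $\mathrm{m}(S)=n_1$, $\mathrm{r}(S)=n_2$, $\mathrm{M}(S)=n_e$. $S$ is a MANS-semigroup if $w(1)<\cdots<w(\mathrm{m}(S)-1)$, where $w(i)$ is the least element of $S$ congruent to $i$ modulo $\mathrm{m}(S)$. $\mathcal{MA}(m,r)$ is the set of MANS-semigroups $S$ with $\mathrm{m}(S)=m$ and $\mathrm{r}(S)=r$. *)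

theory Defs
  imports Main
begin

inductive_set gen :: "nat set \<Rightarrow> nat set" for A :: "nat set" where
  gen_zero: "0 \<in> gen A"
| gen_add: "a \<in> A \<Longrightarrow> x \<in> gen A \<Longrightarrow> a + x \<in> gen A"

definition numerical_semigroup :: "nat set \<Rightarrow> bool" where
  "numerical_semigroup S \<longleftrightarrow> 0 \<in> S \<and> (\<forall>x\<in>S. \<forall>y\<in>S. x + y \<in> S) \<and> finite (UNIV - S)"

definition msg :: "nat set \<Rightarrow> nat set" where
  "msg S = (THE A. gen A = S \<and> (\<forall>B. B \<subset> A \<longrightarrow> gen B \<noteq> S))"

definition embdim :: "nat set \<Rightarrow> nat" where
  "embdim S = card (msg S)"

definition mult :: "nat set \<Rightarrow> nat" where
  "mult S = Min (msg S)"

definition sgen :: "nat set \<Rightarrow> nat" where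
  "sgen S = Min (msg S - {mult S})"

definition maxgen :: "nat set \<Rightarrow> nat" where
  "maxgen S = Max (msg S)"

definition wS :: "nat set \<Rightarrow> nat \<Rightarrow> nat" where
  "wS S i = (LEAST x. x \<in> S \<and> x mod mult S = i mod mult S)"

definition MANS :: "nat set \<Rightarrow> bool" where
  "MANS S \<longleftrightarrow> numerical_semigroup S \<and>
     (\<forall>i j. 1 \<le> i \<and> i < j \<and> j \<le> mult S - 1 \<longrightarrow> wS S i < wS S j)"

definition MA :: "nat \<Rightarrow> nat \<Rightarrow> nat set set" where
  "MA m r = {S. MANS S \<and> mult S = m \<and> sgen S = r}"

end

theory Submission
  imports Defs
begin

text \<open>With \<open>m = m(S)\<close>, the MANS condition says exactly that \<open>x - 1 \<in> S\<close> whenever \<open>x \<in> S\<close> and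
  \<open>x mod m \<ge> 2\<close>; applied to \<open>r\<close> it forces \<open>r \<equiv> 1 (mod m)\<close>. Removing the largest minimal
  generator \<open>g\<close> of such an \<open>S \<noteq> \<langle>m, r\<rangle>\<close> keeps \<open>m\<close> and \<open>r\<close> and keeps the decrement property:
  for a remaining generator \<open>h\<close> with \<open>h mod m \<ge> 2\<close>, the element \<open>h - 1 \<in> S\<close> is a sum of
  generators smaller than \<open>h < g\<close>, and the property passes from generators to sums, since a sum
  of two terms \<open>\<equiv> 1\<close> decrements to an element \<open>\<equiv> r\<close> and \<open>\<ge> r\<close>. The remaining generators are
  still minimal, so each step lowers the embedding dimension by one until \<open>\<langle>m, r\<rangle>\<close>, of
  embedding dimension 2, is reached.\<close>

section \<open>Generated submonoids and minimal generators\<close>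

lemma gen_base: "a \<in> A \<Longrightarrow> a \<in> gen A"
  using gen_add[of a A 0] gen_zero by simp

lemma gen_add_closed: "x \<in> gen A \<Longrightarrow> y \<in> gen A \<Longrightarrow> x + y \<in> gen A"
  by (induction x rule: gen.induct) (auto simp: add.assoc intro: gen_add)

lemma gen_mono: "A \<subseteq> B \<Longrightarrow> gen A \<subseteq> gen B"
proof
  show "x \<in> gen B" if "A \<subseteq> B" "x \<in> gen A" for x
    using that(2,1) by (induction x rule: gen.induct) (auto intro: gen.intros)
qed

definition submonoid :: "nat set \<Rightarrow> bool" where
  "submonoid S \<longleftrightarrow> 0 \<in> S \<and> (\<forall>x\<in>S. \<forall>y\<in>S. x + y \<in> S)"

lemma submonoid_gen: "submonoid (gen A)"
  unfolding submonoid_def by (auto intro: gen_zero gen_add_closed)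

lemma submonoid_mult_closed: "submonoid S \<Longrightarrow> a \<in> S \<Longrightarrow> k * a \<in> S"
  by (induction k) (auto simp: submonoid_def)

lemma gen_minimal: "submonoid S \<Longrightarrow> A \<subseteq> S \<Longrightarrow> gen A \<subseteq> S"
proof
  show "x \<in> S" if "submonoid S" "A \<subseteq> S" "x \<in> gen A" for x
    using that(3,1,2) by (induction x rule: gen.induct) (auto simp: submonoid_def)
qed

lemma gen_generators_le: "x \<in> gen A \<Longrightarrow> x \<in> gen {a \<in> A. a \<le> x}"
proof (induction x rule: gen.induct)
  case gen_zero
  show ?case by (rule gen.gen_zero)
next
  case (gen_add a x)
  have "gen {b \<in> A. b \<le> x} \<subseteq> gen {b \<in> A. b \<le> a + x}"
    by (rule gen_mono) auto
  with gen_add show ?case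
    by (intro gen.gen_add) auto
qed

lemma gen_singleton_dvd: "x \<in> gen {m} \<Longrightarrow> m dvd x"
  by (induction x rule: gen.induct) auto

lemma submonoid_cong_ge_mem:
  assumes "submonoid S" "m \<in> S" "w \<in> S" "w \<le> x" "x mod m = w mod m"
  shows "x \<in> S"
proof -
  obtain q where "x - w = m * q"
    using assms(5) mod_eq_dvd_iff_nat[OF assms(4)] by (auto elim: dvdE)
  then have "x = w + q * m"
    using assms(4) by (simp add: mult.commute)
  moreover have "q * m \<in> S"
    using submonoid_mult_closed[OF assms(1,2)] .
  ultimately show ?thesis
    using assms(1,3) by (simp add: submonoid_def)
qed

definition atoms :: "nat set \<Rightarrow> nat set" where
  "atoms S = {x \<in> S. x \<noteq> 0 \<and> (\<forall>y\<in>S. \<forall>z\<in>S. x = y + z \<longrightarrow> y = 0 \<or> z = 0)}"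

lemma gen_atoms:
  assumes "submonoid S"
  shows "gen (atoms S) = S"
proof
  show "gen (atoms S) \<subseteq> S"
    using assms by (intro gen_minimal) (auto simp: atoms_def)
  show "S \<subseteq> gen (atoms S)"
  proof
    show "s \<in> gen (atoms S)" if "s \<in> S" for s
      using that
    proof (induction s rule: less_induct)
      case (less s)
      show ?case
      proof (cases "s = 0 \<or> s \<in> atoms S")
        case True
        then show ?thesis by (auto intro: gen_zero gen_base)
      next
        case False
        with less.prems obtain y z where "y \<in> S" "z \<in> S" "y \<noteq> 0" "z \<noteq> 0" "s = y + z"
          unfolding atoms_def by auto
        then show ?thesis
          using less.IH[of y] less.IH[of z] by (auto intro: gen_add_closed)
      qed
    qed
  qed
qed

lemma atoms_gen_subset: "atoms (gen A) \<subseteq> A"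
proof
  show "x \<in> A" if "x \<in> atoms (gen A)" for x
  proof -
    have "x \<in> gen A" using that by (simp add: atoms_def)
    then show ?thesis
      using that
    proof (induction x rule: gen.induct)
      case gen_zero
      then show ?case by (simp add: atoms_def)
    next
      case (gen_add a y)
      have "a = 0 \<or> y = 0"
        using gen_add.prems gen_base[OF gen_add.hyps(1)] gen_add.hyps(2) by (auto simp: atoms_def)
      then show ?case
        using gen_add by auto
    qed
  qed
qed

lemma msg_eq_atoms:
  assumes "submonoid S"
  shows "msg S = atoms S"
  unfolding msg_def
proof (rule the_equality)
  show "gen (atoms S) = S \<and> (\<forall>B. B \<subset> atoms S \<longrightarrow> gen B \<noteq> S)"
    using gen_atoms[OF assms] atoms_gen_subset by blast
  show "A = atoms S" if "gen A = S \<and> (\<forall>B. B \<subset> A \<longrightarrow> gen B \<noteq> S)" for A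
    using that gen_atoms[OF assms] atoms_gen_subset[of A] by blast
qed

lemma gen_msg: "submonoid S \<Longrightarrow> gen (msg S) = S"
  by (simp add: msg_eq_atoms gen_atoms)

lemma msg_subset: "submonoid S \<Longrightarrow> msg S \<subseteq> S"
  by (auto simp: msg_eq_atoms atoms_def)

lemma msg_nonzero: "submonoid S \<Longrightarrow> x \<in> msg S \<Longrightarrow> x \<noteq> 0"
  by (auto simp: msg_eq_atoms atoms_def)

lemma msg_irreducible:
  "submonoid S \<Longrightarrow> x \<in> msg S \<Longrightarrow> y \<in> S \<Longrightarrow> z \<in> S \<Longrightarrow> x = y + z \<Longrightarrow> y = 0 \<or> z = 0"
  by (auto simp: msg_eq_atoms atoms_def)

text \<open>Irreducible elements of \<open>S\<close> stay irreducible in any smaller submonoid containing them.\<close>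
lemma msg_gen_subset_msg:
  assumes "submonoid S" "A \<subseteq> msg S"
  shows "msg (gen A) = A"
proof -
  have "gen A \<subseteq> S"
    using assms gen_mono gen_msg by blast
  then have "A \<subseteq> atoms (gen A)"
    using assms by (auto simp: msg_eq_atoms atoms_def intro: gen_base)
  then show ?thesis
    using atoms_gen_subset[of A] by (simp add: msg_eq_atoms[OF submonoid_gen])
qed

section \<open>Numerical semigroups and the MANS condition\<close>

lemma mod_diff_one: "(x::nat) mod m \<noteq> 0 \<Longrightarrow> (x - 1) mod m = x mod m - 1"
  by (cases x) (auto simp: mod_Suc)

lemma numerical_semigroup_submonoid: "numerical_semigroup S \<Longrightarrow> submonoid S"
  by (simp add: numerical_semigroup_def submonoid_def)

lemma numerical_semigroup_ge_mem:
  assumes "numerical_semigroup S"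
  obtains c where "\<And>x. c \<le> x \<Longrightarrow> x \<in> S"
proof -
  have "finite (UNIV - S)"
    using assms by (simp add: numerical_semigroup_def)
  then obtain c where "\<forall>x \<in> UNIV - S. x < c"
    using finite_nat_set_iff_bounded by blast
  then show ?thesis
    using that by (meson DiffI UNIV_I not_le)
qed

lemma finite_msg:
  assumes "numerical_semigroup S"
  shows "finite (msg S)"
proof -
  obtain c where c: "\<And>x. c \<le> x \<Longrightarrow> x \<in> S"
    using numerical_semigroup_ge_mem[OF assms] by blast
  have "x < 2 * Suc c" if "x \<in> msg S" for x
  proof (rule ccontr)
    assume "\<not> x < 2 * Suc c"
    then have "Suc c \<in> S" "x - Suc c \<in> S" "x = Suc c + (x - Suc c)"
      using c by auto
    then show False
      using msg_irreducible[OF numerical_semigroup_submonoid[OF assms] that] \<open>\<not> x < 2 * Suc c\<close>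
      by fastforce
  qed
  then show ?thesis
    using finite_nat_set_iff_bounded by blast
qed

lemma msg_not_subset_singleton:
  assumes "numerical_semigroup S" "m \<noteq> 1"
  shows "\<not> msg S \<subseteq> {m}"
proof
  assume "msg S \<subseteq> {m}"
  then have "S \<subseteq> gen {m}"
    using gen_mono gen_msg[OF numerical_semigroup_submonoid[OF assms(1)]] by blast
  moreover obtain c where "\<And>x. c \<le> x \<Longrightarrow> x \<in> S"
    using numerical_semigroup_ge_mem[OF assms(1)] by blast
  ultimately have "c \<in> gen {m}" "Suc c \<in> gen {m}"
    by auto
  then have "m dvd c" "m dvd Suc c"
    by (simp_all add: gen_singleton_dvd)
  then have "m dvd 1"
    using dvd_add_right_iff[of m c 1] by simp
  with assms(2) show False
    by simp
qed

lemma mult_in_msg: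
  assumes "numerical_semigroup S"
  shows "mult S \<in> msg S"
proof -
  have "msg S \<noteq> {}"
    using msg_not_subset_singleton[OF assms, of 0] by auto
  then show ?thesis
    unfolding mult_def using Min_in finite_msg[OF assms] by blast
qed

lemma mult_le_msg: "numerical_semigroup S \<Longrightarrow> a \<in> msg S \<Longrightarrow> mult S \<le> a"
  unfolding mult_def using Min_le finite_msg by blast

lemma mult_mem: "numerical_semigroup S \<Longrightarrow> mult S \<in> S"
  using mult_in_msg msg_subset numerical_semigroup_submonoid by blast

lemma mult_pos: "numerical_semigroup S \<Longrightarrow> 0 < mult S"
  using mult_in_msg msg_nonzero numerical_semigroup_submonoid by blast

lemma
  assumes "numerical_semigroup S"
  shows wS_mem: "wS S i \<in> S"
    and wS_mod: "wS S i mod mult S = i mod mult S"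
    and wS_le: "x \<in> S \<Longrightarrow> x mod mult S = i mod mult S \<Longrightarrow> wS S i \<le> x"
proof -
  let ?m = "mult S"
  obtain c where "\<And>x. c \<le> x \<Longrightarrow> x \<in> S"
    using numerical_semigroup_ge_mem[OF assms] by blast
  moreover have "c \<le> c * ?m + i mod ?m"
    using mult_pos[OF assms] by (simp add: trans_le_add1)
  ultimately have "\<exists>x. x \<in> S \<and> x mod ?m = i mod ?m"
    by (metis mod_mult_self3 mod_mod_trivial)
  then have "wS S i \<in> S \<and> wS S i mod ?m = i mod ?m"
    unfolding wS_def by (rule LeastI_ex)
  then show "wS S i \<in> S" "wS S i mod ?m = i mod ?m"
    by simp_all
  show "x \<in> S \<Longrightarrow> x mod ?m = i mod ?m \<Longrightarrow> wS S i \<le> x"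
    unfolding wS_def by (simp add: Least_le)
qed

lemma MANS_iff:
  assumes ns: "numerical_semigroup S"
  shows "MANS S \<longleftrightarrow> (\<forall>x \<in> S. 2 \<le> x mod mult S \<longrightarrow> x - 1 \<in> S)"
proof -
  let ?m = "mult S"
  have m_pos: "0 < ?m"
    by (rule mult_pos[OF ns])
  have decrement: "x - 1 \<in> S"
    if "wS S (x mod ?m - 1) < wS S (x mod ?m)" "x \<in> S" "2 \<le> x mod ?m" for x
  proof (rule submonoid_cong_ge_mem[OF numerical_semigroup_submonoid[OF ns] mult_mem[OF ns]])
    show "wS S (x mod ?m - 1) \<in> S"
      by (rule wS_mem[OF ns])
    show "wS S (x mod ?m - 1) \<le> x - 1"
      using that(1) wS_le[OF ns that(2), of "x mod ?m"] by simp
    show "(x - 1) mod ?m = wS S (x mod ?m - 1) mod ?m"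
      using that(3) wS_mod[OF ns] m_pos mod_diff_one[of x ?m] by (simp add: less_imp_diff_less)
  qed
  have wS_step: "wS S (j - 1) < wS S j"
    if "\<forall>x \<in> S. 2 \<le> x mod ?m \<longrightarrow> x - 1 \<in> S" "2 \<le> j" "j \<le> ?m - 1" for j
  proof -
    have w_mod: "wS S j mod ?m = j"
      using wS_mod[OF ns, of j] that(3) m_pos by simp
    then have "wS S j - 1 \<in> S"
      using that wS_mem[OF ns, of j] by simp
    moreover have "(wS S j - 1) mod ?m = (j - 1) mod ?m"
      using w_mod that mod_diff_one[of "wS S j" ?m] by simp
    ultimately have "wS S (j - 1) \<le> wS S j - 1"
      by (rule wS_le[OF ns])
    moreover have "wS S j \<noteq> 0"
      using w_mod that(2) by (metis mod_0 not_numeral_le_zero)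
    ultimately show ?thesis
      by simp
  qed
  show ?thesis
  proof
    assume "MANS S"
    show "\<forall>x \<in> S. 2 \<le> x mod ?m \<longrightarrow> x - 1 \<in> S"
    proof (intro ballI impI)
      fix x assume "x \<in> S" "2 \<le> x mod ?m"
      moreover have "x mod ?m \<le> ?m - 1"
        using m_pos by (simp add: less_Suc_eq_le[symmetric])
      ultimately show "x - 1 \<in> S"
        using \<open>MANS S\<close> by (intro decrement) (auto simp: MANS_def)
    qed
  next
    assume H: "\<forall>x \<in> S. 2 \<le> x mod ?m \<longrightarrow> x - 1 \<in> S"
    have "wS S i < wS S j" if "1 \<le> i" "i < j" "j \<le> ?m - 1" for i j
      using \<open>i < j\<close> [unfolded Suc_le_eq[symmetric]] that(3)
    proof (induction j rule: dec_induct)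
      case base
      then show ?case using wS_step[OF H, of "Suc i"] that(1) by simp
    next
      case (step n)
      then show ?case using wS_step[OF H, of "Suc n"] that(1) by simp
    qed
    with ns show "MANS S"
      by (simp add: MANS_def)
  qed
qed

lemma
  assumes "numerical_semigroup S" "mult S \<noteq> 1"
  shows sgen_in_msg: "sgen S \<in> msg S - {mult S}"
    and sgen_le_msg: "a \<in> msg S - {mult S} \<Longrightarrow> sgen S \<le> a"
proof -
  have fin: "finite (msg S - {mult S})"
    using finite_msg[OF assms(1)] by simp
  moreover have "msg S - {mult S} \<noteq> {}"
    using msg_not_subset_singleton[OF assms] by auto
  ultimately show "sgen S \<in> msg S - {mult S}"
    unfolding sgen_def by (rule Min_in)
  show "a \<in> msg S - {mult S} \<Longrightarrow> sgen S \<le> a"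
    unfolding sgen_def using fin by (rule Min_le)
qed

lemma sgen_le_nonmultiple:
  assumes ns: "numerical_semigroup S" and "mult S \<noteq> 1" "x \<in> S" "\<not> mult S dvd x"
  shows "sgen S \<le> x"
proof -
  have "x \<in> gen (msg S)"
    using assms(3) gen_msg[OF numerical_semigroup_submonoid[OF ns]] by simp
  then show ?thesis
    using assms(4)
  proof (induction x rule: gen.induct)
    case (gen_add a y)
    then show ?case
      using sgen_le_msg[OF ns \<open>mult S \<noteq> 1\<close>, of a] by (cases "a = mult S") auto
  qed simp
qed

lemma sgen_mod_mult:
  assumes "MANS S" "mult S \<noteq> 1"
  shows "sgen S mod mult S = 1"
proof -
  let ?m = "mult S" and ?r = "sgen S"
  have ns: "numerical_semigroup S"
    using assms(1) by (simp add: MANS_def)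
  have sub: "submonoid S"
    by (rule numerical_semigroup_submonoid[OF ns])
  have r_msg: "?r \<in> msg S" "?r \<noteq> ?m"
    using sgen_in_msg[OF ns assms(2)] by auto
  have "?m < ?r"
    using r_msg mult_le_msg[OF ns] by (simp add: order_less_le)
  have "\<not> ?m dvd ?r"
  proof
    assume "?m dvd ?r"
    then obtain q where "?r - ?m = q * ?m"
      using \<open>?m < ?r\<close> by (metis dvd_diff_nat dvd_refl dvdE mult.commute)
    then have "?r - ?m \<in> S"
      using submonoid_mult_closed[OF sub mult_mem[OF ns]] by simp
    then show False
      using msg_irreducible[OF sub r_msg(1) mult_mem[OF ns], of "?r - ?m"] \<open>?m < ?r\<close>
        mult_pos[OF ns] by simp
  qed
  moreover have "\<not> 2 \<le> ?r mod ?m"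
  proof
    assume "2 \<le> ?r mod ?m"
    then have "?r - 1 \<in> S" "(?r - 1) mod ?m \<noteq> 0"
      using assms(1) MANS_iff[OF ns] msg_subset[OF sub] r_msg(1) mod_diff_one[of ?r ?m] by auto
    then have "?r \<le> ?r - 1"
      using sgen_le_nonmultiple[OF ns assms(2)] by (simp add: dvd_eq_mod_eq_0)
    then show False
      using \<open>?m < ?r\<close> by simp
  qed
  ultimately show ?thesis
    by (simp add: dvd_eq_mod_eq_0)
qed

lemma ge_mem_gen_pair:
  assumes "r mod m = 1" "m * r \<le> x"
  shows "x \<in> gen {m, r}"
proof (rule submonoid_cong_ge_mem[OF submonoid_gen])
  let ?j = "x mod m"
  show "m \<in> gen {m, r}" "?j * r \<in> gen {m, r}"
    by (auto intro: gen_base submonoid_mult_closed[OF submonoid_gen])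
  show "?j * r \<le> x"
  proof (cases "m = 0")
    case False
    then have "?j * r \<le> m * r"
      by simp
    with assms(2) show ?thesis
      by linarith
  qed (use assms(1) in simp)
  show "x mod m = ?j * r mod m"
    using assms(1) by (metis mod_mult_right_eq mult.right_neutral mod_mod_trivial)
qed

lemma numerical_semigroup_gen:
  assumes "m \<in> A" "r \<in> A" "r mod m = 1"
  shows "numerical_semigroup (gen A)"
proof -
  have "gen {m, r} \<subseteq> gen A"
    using assms(1,2) by (intro gen_mono) auto
  then have "UNIV - gen A \<subseteq> {..< m * r}"
    using ge_mem_gen_pair[OF assms(3)] by (meson DiffD2 lessThan_iff not_le subsetD subsetI)
  then have "finite (UNIV - gen A)"
    using finite_subset by blast
  then show ?thesis
    using submonoid_gen by (simp add: numerical_semigroup_def submonoid_def)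
qed

lemma gen_decrement:
  assumes "m \<in> G" "r \<in> G" "r mod m = 1"
    and r_le: "\<And>g. g \<in> G \<Longrightarrow> g mod m = 1 \<Longrightarrow> r \<le> g"
    and generator_decrement: "\<And>g. g \<in> G \<Longrightarrow> 2 \<le> g mod m \<Longrightarrow> g - 1 \<in> gen G"
    and "x \<in> gen G" "2 \<le> x mod m"
  shows "x - 1 \<in> gen G"
  using assms(6,7)
proof (induction x rule: gen.induct)
  case (gen_add h y)
  have sum_mod: "(h + y) mod m = (h mod m + y mod m) mod m"
    by (simp add: mod_add_eq)
  have "h mod m = 1 \<and> y mod m = 1" if "h mod m < 2" "y mod m < 2"
    using that gen_add.prems sum_mod by (auto simp: less_2_cases_iff)
  then consider "2 \<le> y mod m" | "2 \<le> h mod m" | "h mod m = 1" "y mod m = 1"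
    by fastforce
  then show ?case
  proof cases
    case 1
    then have "h + (y - 1) \<in> gen G"
      using gen_add gen_add_closed[OF gen_base] by blast
    moreover have "y \<noteq> 0"
      using 1 by (cases y) auto
    ultimately show ?thesis
      by simp
  next
    case 2
    then have "h - 1 + y \<in> gen G"
      using gen_add generator_decrement gen_add_closed by blast
    moreover have "h \<noteq> 0"
      using 2 by (cases h) auto
    ultimately show ?thesis
      by simp
  next
    case 3
    show ?thesis
    proof (rule submonoid_cong_ge_mem[OF submonoid_gen gen_base gen_base])
      show "m \<in> G" "r \<in> G"
        by (fact assms(1), fact assms(2))
      show "r \<le> h + y - 1"
        using r_le[OF gen_add.hyps(1) 3(1)] 3(2) by (cases y) auto
      have "(h + y) mod m = 2"
        by (metis 3 sum_mod gen_add.prems le_antisym mod_less_eq_dividend one_add_one)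
      then show "(h + y - 1) mod m = r mod m"
        using assms(3) mod_diff_one[of "h + y" m] by simp
    qed
  qed
qed simp

section \<open>Removing the largest minimal generator\<close>

lemma maxgen_in_msg:
  assumes "numerical_semigroup S"
  shows "maxgen S \<in> msg S"
proof -
  have "msg S \<noteq> {}"
    using mult_in_msg[OF assms] by blast
  then show ?thesis
    unfolding maxgen_def by (rule Max_in[OF finite_msg[OF assms]])
qed

lemma embdim_remove_maxgen:
  assumes "numerical_semigroup S"
  shows "embdim (gen (msg S - {maxgen S})) = embdim S - 1"
proof -
  have "msg (gen (msg S - {maxgen S})) = msg S - {maxgen S}"
    by (rule msg_gen_subset_msg[OF numerical_semigroup_submonoid[OF assms]]) blast
  then show ?thesis
    unfolding embdim_def using maxgen_in_msg[OF assms] by simp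
qed

lemma MA_numerical_semigroup: "S \<in> MA m r \<Longrightarrow> numerical_semigroup S"
  by (simp add: MA_def MANS_def)

lemma
  assumes "S \<in> MA m r" "1 < m"
  shows MA_mult_in_msg: "m \<in> msg S"
    and MA_sgen_in_msg: "r \<in> msg S"
    and MA_sgen_le_msg: "a \<in> msg S \<Longrightarrow> a \<noteq> m \<Longrightarrow> r \<le> a"
    and MA_mult_less_sgen: "m < r"
    and MA_sgen_mod: "r mod m = 1"
proof -
  have ns: "numerical_semigroup S" and m: "mult S = m" and r: "sgen S = r"
    using assms(1) by (auto simp: MA_def MANS_def)
  have "m \<noteq> 1"
    using assms(2) by simp
  show "m \<in> msg S"
    using mult_in_msg[OF ns] m by simp
  show r_msg: "r \<in> msg S"
    using sgen_in_msg[OF ns] \<open>m \<noteq> 1\<close> m r by auto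
  show "a \<in> msg S \<Longrightarrow> a \<noteq> m \<Longrightarrow> r \<le> a"
    using sgen_le_msg[OF ns, of a] \<open>m \<noteq> 1\<close> m r by simp
  show "m < r"
    using sgen_in_msg[OF ns] mult_le_msg[OF ns r_msg] \<open>m \<noteq> 1\<close> m r by (auto simp: order_less_le)
  show "r mod m = 1"
    using sgen_mod_mult[of S] assms(1) \<open>m \<noteq> 1\<close> m r by (simp add: MA_def)
qed

lemma
  assumes "S \<in> MA m r" "1 < m" "S \<noteq> gen {m, r}"
  shows MA_embdim_ge_3: "3 \<le> embdim S"
    and MA_sgen_less_maxgen: "r < maxgen S"
proof -
  have ns: "numerical_semigroup S"
    using assms(1) by (rule MA_numerical_semigroup)
  have "msg S \<noteq> {m, r}"
    using assms(3) gen_msg[OF numerical_semigroup_submonoid[OF ns]] by metis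
  then obtain z where z: "z \<in> msg S" "z \<noteq> m" "z \<noteq> r"
    using MA_mult_in_msg[OF assms(1,2)] MA_sgen_in_msg[OF assms(1,2)] by blast
  then have "r < z"
    using MA_sgen_le_msg[OF assms(1,2)] by (simp add: order_less_le)
  have "{m, r, z} \<subseteq> msg S"
    using MA_mult_in_msg[OF assms(1,2)] MA_sgen_in_msg[OF assms(1,2)] z(1) by blast
  then have "card {m, r, z} \<le> embdim S"
    unfolding embdim_def by (rule card_mono[OF finite_msg[OF ns]])
  with MA_mult_less_sgen[OF assms(1,2)] \<open>r < z\<close> show "3 \<le> embdim S"
    by simp
  show "r < maxgen S"
    using \<open>r < z\<close> z(1) finite_msg[OF ns] unfolding maxgen_def by (meson Max_ge less_le_trans)
qed

lemma MA_remove_maxgen: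
  assumes "S \<in> MA m r" "1 < m" "S \<noteq> gen {m, r}"
  shows "gen (msg S - {maxgen S}) \<in> MA m r"
proof -
  define A where "A = msg S - {maxgen S}"
  have "MANS S" and ns: "numerical_semigroup S" and m: "mult S = m"
    using assms(1) by (auto simp: MA_def MANS_def)
  have sub: "submonoid S"
    by (rule numerical_semigroup_submonoid[OF ns])
  note r_mod = MA_sgen_mod[OF assms(1,2)]
  note sgen_le = MA_sgen_le_msg[OF assms(1,2)]
  have msg_A: "msg (gen A) = A"
    unfolding A_def by (rule msg_gen_subset_msg[OF sub]) blast
  have "m < maxgen S"
    using MA_sgen_less_maxgen[OF assms] MA_mult_less_sgen[OF assms(1,2)] by simp
  then have "m \<in> A" "r \<in> A"
    using MA_mult_in_msg[OF assms(1,2)] MA_sgen_in_msg[OF assms(1,2)]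
      MA_sgen_less_maxgen[OF assms] by (auto simp: A_def)
  have mult_A: "mult (gen A) = m"
    unfolding mult_def msg_A
    using \<open>m \<in> A\<close> mult_le_msg[OF ns] m by (intro Min_eqI) (auto simp: A_def finite_msg[OF ns])
  have sgen_A: "sgen (gen A) = r"
    unfolding sgen_def msg_A mult_A
    using \<open>r \<in> A\<close> MA_mult_less_sgen[OF assms(1,2)] sgen_le
    by (intro Min_eqI) (auto simp: A_def finite_msg[OF ns])
  have ns_A: "numerical_semigroup (gen A)"
    using numerical_semigroup_gen[OF \<open>m \<in> A\<close> \<open>r \<in> A\<close> r_mod] .
  have "x - 1 \<in> gen A" if "x \<in> gen A" "2 \<le> x mod m" for x
  proof (rule gen_decrement[OF \<open>m \<in> A\<close> \<open>r \<in> A\<close> r_mod _ _ that])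
    show "r \<le> g" if "g \<in> A" "g mod m = 1" for g
    proof -
      have "g \<noteq> m"
        using that(2) by auto
      with that(1) show ?thesis
        using sgen_le by (simp add: A_def)
    qed
    show "g - 1 \<in> gen A" if "g \<in> A" "2 \<le> g mod m" for g
    proof -
      have "g - 1 \<in> S"
        using that \<open>MANS S\<close> MANS_iff[OF ns] msg_subset[OF sub] m by (auto simp: A_def)
      then have "g - 1 \<in> gen {a \<in> msg S. a \<le> g - 1}"
        using gen_generators_le gen_msg[OF sub] by blast
      moreover have "g \<le> maxgen S"
        using that(1) finite_msg[OF ns] by (auto simp: A_def maxgen_def)
      then have "{a \<in> msg S. a \<le> g - 1} \<subseteq> A"
        using that(2) by (cases g) (auto simp: A_def)
      ultimately show ?thesis
        using gen_mono by blast
    qed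
  qed
  then have "MANS (gen A)"
    using MANS_iff[OF ns_A] mult_A by blast
  then show ?thesis
    using mult_A sgen_A by (simp add: MA_def A_def)
qed

theorem proposition4p8:
  fixes m r :: nat and S :: "nat set" and Sn :: "nat \<Rightarrow> nat set"
  assumes "m > 1" and "r > 2" and "S \<in> MA m r"
    and "Sn 0 = S"
    and "\<And>n. Sn (Suc n) = (if Sn n \<noteq> gen {m, r}
                              then gen (msg (Sn n) - {maxgen (Sn n)})
                              else gen {m, r})"
  shows "(\<forall>n. Sn n \<in> MA m r) \<and> (\<forall>k. k \<ge> embdim S - 2 \<longrightarrow> Sn k = gen {m, r})"
proof -
  have invariant: "Sn n \<in> MA m r \<and> (Sn n = gen {m, r} \<or> embdim (Sn n) + n = embdim S)" for n
  proof (induction n)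
    case (Suc n)
    show ?case
    proof (cases "Sn n = gen {m, r}")
      case False
      have "Sn n \<in> MA m r"
        using Suc.IH by simp
      then have "Sn (Suc n) \<in> MA m r" "embdim (Sn (Suc n)) = embdim (Sn n) - 1"
          "3 \<le> embdim (Sn n)"
        using False assms(5)[of n] MA_remove_maxgen[OF _ assms(1)] MA_embdim_ge_3[OF _ assms(1)]
          embdim_remove_maxgen[OF MA_numerical_semigroup] by auto
      then show ?thesis
        using Suc.IH False by auto
    qed (use Suc.IH assms(5) in auto)
  qed (use assms(3,4) in simp)
  have "Sn k = gen {m, r}" if "embdim S - 2 \<le> k" for k
    using invariant[of k] MA_embdim_ge_3[OF _ assms(1), of "Sn k"] that by fastforce
  then show ?thesis
    using invariant by blast
qed

end
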